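(* Let $\mathcal{H}$ be any undirected hypergraph on the vertex set $\{1,2,3\}$, and consider any network dynamical system on $\mathcal{H}$ with one-dimensional node states, smooth intrinsic dynamics $F$ and smooth, edge-dependent coupling functions $G_e$ (each invariant under permutations of its tail arguments). Then the resulting vector field on $\mathbb{R}^3$ is not equal to the Guckenheimer--Holmes vector field $$\dot x_1 = x_1 + a x_1^3 + b x_1x_2^2 + c x_1x_3^2,\quad \dot x_2 = x_2 + a x_2^3 + b x_2x_3^2 + c x_1^2x_2,\quad \dot x_3 = x_3 + a x_3^3 + b x_1^2x_3 + c x_2^2x_3$$ for any real parameters $a,b,c$ with $b\neq c$. In particular, the Guckenheimer--Holmes system cannot be realized for any parameters satisfying $a+b+c=-1$, $-\tfrac13<a<0$, $c<a<b<0$.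
   Context: A directed hypergraph on $\mathcal{V}=\{1,\dots,N\}$ is a set $\mathcal{E}$ of hyperedges $e=(T(e),H(e))$ with nonempty tail $T(e)\subseteq\mathcal{V}$ and head $H(e)\subseteq\mathcal{V}$. It is undirected if every hyperedge has the form $e=(A,A)$, $A\subseteq\mathcal V$ nonempty. A network dynamical system on $\mathcal{H}$ with one-dimensional node states is the ODE on $\mathbb{R}^N$ $$\dot x_k = F(x_k) + \sum_{e\in\mathcal{E}:\,k\in H(e)} G_e(x_k; x_{T(e)}),\qquad k=1,\dots,N,$$ where $F:\mathbb{R}\to\mathbb{R}$ is smooth, each $G_e:\mathbb{R}\times\mathbb{R}^{|T(e)|}\to\mathbb{R}$ is smooth, invariant under permutations of its last $|T(e)|$ arguments, and depends nontrivially on them; $x_{T(e)}$ denotes the vector of the $x_j$, $j\in T(e)$. (For an undirected edge $A$, node $k\in A$ thus receives $G_A(x_k;x_A)$, where $x_A$ includes $x_k$.) "Realizing" a vector field means that the network vector field equals it identically. *)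

theory Defs
  imports "HOL-Analysis.Analysis" "HOL-Combinatorics.Permutations"
begin

text \<open>C-infinity smoothness of a real-valued function on a finite-dimensional
  normed space: Frechet differentiable everywhere, and every directional
  derivative (of the derivative) is again smooth.  Since differentiable
  functions are continuous, this is exactly C-infinity.\<close>
coinductive smooth_fun :: "('a::real_normed_vector \<Rightarrow> real) \<Rightarrow> bool" where
  "(\<And>x. (f has_derivative f' x) (at x)) \<Longrightarrow> (\<And>v. smooth_fun (\<lambda>x. f' x v))
   \<Longrightarrow> smooth_fun f"

text \<open>Nodes are 1,2,3.  A state of R^3 is read off a triple.\<close>
definition st :: "real \<times> real \<times> real \<Rightarrow> nat \<Rightarrow> real" where
  "st y j = (if j = 1 then fst y else if j = 2 then fst (snd y)
             else if j = 3 then snd (snd y) else 0)"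

definition tup :: "(nat \<Rightarrow> real) \<Rightarrow> real \<times> real \<times> real" where
  "tup x = (x 1, x 2, x 3)"

text \<open>Undirected hypergraph on {1,2,3}: each hyperedge (A,A) is represented by A.\<close>
definition undirected_hypergraph3 :: "nat set set \<Rightarrow> bool" where
  "undirected_hypergraph3 E \<longleftrightarrow> (\<forall>A\<in>E. A \<noteq> {} \<and> A \<subseteq> {1,2,3})"

text \<open>Admissible coupling function for edge A: g(x_k, y) where y in R^3 is the
  state of all nodes; g is smooth, depends on y only through the tail
  coordinates y_j (j in A) (i.e. it is a smooth function on R x R^A),
  is invariant under permutations of the tail arguments, and depends
  nontrivially on them.\<close>
definition coupling :: "nat set \<Rightarrow> (real \<times> (real \<times> real \<times> real) \<Rightarrow> real) \<Rightarrow> bool" where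
  "coupling A g \<longleftrightarrow>
     smooth_fun g
   \<and> (\<forall>u y y'. (\<forall>j\<in>A. st y j = st y' j) \<longrightarrow> g (u, y) = g (u, y'))
   \<and> (\<forall>\<sigma> u y. \<sigma> permutes A \<longrightarrow> g (u, tup (st y \<circ> \<sigma>)) = g (u, y))
   \<and> (\<exists>u y y'. g (u, y) \<noteq> g (u, y'))"

definition netvf :: "(real \<Rightarrow> real) \<Rightarrow> nat set set
    \<Rightarrow> (nat set \<Rightarrow> real \<times> (real \<times> real \<times> real) \<Rightarrow> real) \<Rightarrow> (nat \<Rightarrow> real) \<Rightarrow> nat \<Rightarrow> real" where
  "netvf F E G x k = F (x k) + (\<Sum>A\<in>{A\<in>E. k \<in> A}. G A (x k, tup x))"

definition GH :: "real \<Rightarrow> real \<Rightarrow> real \<Rightarrow> (nat \<Rightarrow> real) \<Rightarrow> nat \<Rightarrow> real" where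
  "GH a b c x k =
    (if k = 1 then x 1 + a * x 1 ^ 3 + b * x 1 * x 2 ^ 2 + c * x 1 * x 3 ^ 2
     else if k = 2 then x 2 + a * x 2 ^ 3 + b * x 2 * x 3 ^ 2 + c * x 1 ^ 2 * x 2
     else x 3 + a * x 3 ^ 3 + b * x 1 ^ 2 * x 3 + c * x 2 ^ 2 * x 3)"

end

theory Submission
  imports Defs
begin

text \<open>Restrict both vector fields to the plane \<open>x\<^sub>3 = 0\<close> and take the mixed second
  difference in \<open>(x\<^sub>1, x\<^sub>2)\<close> over the unit square.  For the Guckenheimer--Holmes
  field it equals \<open>b\<close> in component 1 and \<open>c\<close> in component 2.  For a network field the
  intrinsic term \<open>F(x\<^sub>k)\<close> and every edge containing only one of the nodes 1, 2 drop out,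
  while an edge containing both contributes the same amount to both components,
  because its coupling is symmetric under exchanging \<open>x\<^sub>1\<close> and \<open>x\<^sub>2\<close>.  Hence \<open>b = c\<close>.\<close>

definition mixed_diff :: "(real \<Rightarrow> real \<Rightarrow> real) \<Rightarrow> real" where
  "mixed_diff h = h 1 1 - h 1 0 - h 0 1 + h 0 0"

lemma mixed_diff_sum:
  "mixed_diff (\<lambda>p q. \<Sum>i\<in>I. h i p q) = (\<Sum>i\<in>I. mixed_diff (h i))"
  by (simp add: mixed_diff_def sum.distrib sum_subtractf)

lemma mixed_diff_add_separable:
  "mixed_diff (\<lambda>p q. f p + h p q) = mixed_diff h"
  "mixed_diff (\<lambda>p q. f q + h p q) = mixed_diff h"
  by (simp_all add: mixed_diff_def)

lemma mixed_diff_const_snd: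
  assumes "\<And>p q q'. h p q = h p q'"
  shows "mixed_diff h = 0"
  using assms[where p = 1 and q = 1 and q' = 0] assms[where p = 0 and q = 1 and q' = 0]
  unfolding mixed_diff_def by linarith

lemma mixed_diff_const_fst:
  assumes "\<And>p p' q. h p q = h p' q"
  shows "mixed_diff h = 0"
  using assms[where p = 1 and p' = 0 and q = 1] assms[where p = 1 and p' = 0 and q = 0]
  unfolding mixed_diff_def by linarith

lemma tup_st [simp]: "tup (st y) = y"
  by (simp add: tup_def st_def)

lemma st_eval: "st (p, q, r) 1 = p" "st (p, q, r) 2 = q"
  unfolding st_def by simp_all

lemma finite_undirected_hypergraph3:
  assumes "undirected_hypergraph3 E"
  shows "finite E"
proof (rule finite_subset)
  show "E \<subseteq> Pow {1, 2, 3}"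
    using assms by (auto simp: undirected_hypergraph3_def)
qed simp

lemma netvf_eq_sum:
  assumes "finite E"
  shows "netvf F E G x k = F (x k) + (\<Sum>A\<in>E. if k \<in> A then G A (x k, tup x) else 0)"
  by (simp add: netvf_def sum.inter_filter[OF assms])

lemma coupling_swap12:
  assumes "coupling A g" "1 \<in> A" "2 \<in> A"
  shows "g (u, (q, p, r)) = g (u, (p, q, r))"
proof -
  have "Transposition.transpose (1::nat) 2 permutes A"
    using assms(2,3) by (rule permutes_swap_id)
  moreover have "tup (st (p, q, r) \<circ> Transposition.transpose 1 2) = (q, p, r)"
    by (simp add: tup_def st_def)
  ultimately show ?thesis
    using assms(1) unfolding coupling_def by metis
qed

lemma coupling_local:
  assumes "coupling A g" "\<forall>j\<in>A. st y j = st y' j"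
  shows "g (u, y) = g (u, y')"
  using assms unfolding coupling_def by blast

lemma coupling_indep_fst:
  assumes "coupling A g" "1 \<notin> A"
  shows "g (u, (p, q, r)) = g (u, (p', q, r))"
  using assms(2) by (intro coupling_local[OF assms(1)]) (auto simp: st_def)

lemma coupling_indep_snd:
  assumes "coupling A g" "2 \<notin> A"
  shows "g (u, (p, q, r)) = g (u, (p, q', r))"
  using assms(2) by (intro coupling_local[OF assms(1)]) (auto simp: st_def)

lemma coupling_mixed_diff_12:
  assumes "coupling A g" "A \<subseteq> {1, 2, 3}"
  shows "mixed_diff (\<lambda>p q. if 1 \<in> A then g (p, (p, q, 0)) else 0)
       = mixed_diff (\<lambda>p q. if 2 \<in> A then g (q, (p, q, 0)) else 0)"
proof (cases "1 \<in> A"; cases "2 \<in> A")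
  assume "1 \<in> A" "2 \<in> A"
  then have "(\<lambda>p q. g (q, (p, q, 0))) = (\<lambda>p q. g (q, (q, p, 0)))"
    by (intro ext) (rule coupling_swap12[OF assms(1), symmetric])
  with \<open>1 \<in> A\<close> \<open>2 \<in> A\<close> show ?thesis
    by (simp add: mixed_diff_def)
next
  assume "1 \<in> A" "2 \<notin> A"
  have "mixed_diff (\<lambda>p q. g (p, (p, q, 0))) = 0"
    by (rule mixed_diff_const_snd) (rule coupling_indep_snd[OF assms(1) \<open>2 \<notin> A\<close>])
  with \<open>1 \<in> A\<close> \<open>2 \<notin> A\<close> show ?thesis
    by (simp add: mixed_diff_def)
next
  assume "1 \<notin> A" "2 \<in> A"
  have "mixed_diff (\<lambda>p q. g (q, (p, q, 0))) = 0"
    by (rule mixed_diff_const_fst) (rule coupling_indep_fst[OF assms(1) \<open>1 \<notin> A\<close>])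
  with \<open>1 \<notin> A\<close> \<open>2 \<in> A\<close> show ?thesis
    by (simp add: mixed_diff_def)
qed simp

lemma netvf_on_plane_12:
  assumes "finite E"
  shows "netvf F E G (st (p, q, 0)) 1 = F p + (\<Sum>A\<in>E. if 1 \<in> A then G A (p, (p, q, 0)) else 0)"
    and "netvf F E G (st (p, q, 0)) 2 = F q + (\<Sum>A\<in>E. if 2 \<in> A then G A (q, (p, q, 0)) else 0)"
  unfolding netvf_eq_sum[OF assms] st_eval tup_st by (rule refl)+

lemma netvf_mixed_diff_12:
  assumes "undirected_hypergraph3 E" "\<forall>A\<in>E. coupling A (G A)"
  shows "mixed_diff (\<lambda>p q. netvf F E G (st (p, q, 0)) 1)
       = mixed_diff (\<lambda>p q. netvf F E G (st (p, q, 0)) 2)"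
proof -
  have "finite E"
    using assms(1) by (rule finite_undirected_hypergraph3)
  moreover have "A \<subseteq> {1, 2, 3}" if "A \<in> E" for A
    using assms(1) that by (auto simp: undirected_hypergraph3_def)
  ultimately show ?thesis
    using assms(2)
    by (simp only: netvf_on_plane_12 mixed_diff_add_separable mixed_diff_sum)
       (intro sum.cong refl coupling_mixed_diff_12; blast)
qed

lemma GH_mixed_diff:
  "mixed_diff (\<lambda>p q. GH a b c (st (p, q, 0)) 1) = b"
  "mixed_diff (\<lambda>p q. GH a b c (st (p, q, 0)) 2) = c"
  by (simp_all add: mixed_diff_def GH_def st_def)

theorem mainTheorem1:
  fixes E :: "nat set set"
    and F :: "real \<Rightarrow> real"
    and G :: "nat set \<Rightarrow> real \<times> (real \<times> real \<times> real) \<Rightarrow> real"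
    and a b c :: real
  assumes "undirected_hypergraph3 E"
    and "smooth_fun F"
    and "\<forall>A\<in>E. coupling A (G A)"
    and "b \<noteq> c"
  shows "\<not> (\<forall>x :: nat \<Rightarrow> real. \<forall>k\<in>{1,2,3}. netvf F E G x k = GH a b c x k)"
proof
  assume "\<forall>x :: nat \<Rightarrow> real. \<forall>k\<in>{1,2,3}. netvf F E G x k = GH a b c x k"
  then have on_plane: "netvf F E G (st (p, q, 0)) k = GH a b c (st (p, q, 0)) k"
    if "k \<in> {1, 2}" for p q k
    using that by blast
  have "b = mixed_diff (\<lambda>p q. GH a b c (st (p, q, 0)) 1)"
    by (rule GH_mixed_diff(1)[symmetric])
  also have "\<dots> = mixed_diff (\<lambda>p q. netvf F E G (st (p, q, 0)) 1)"
    by (simp add: on_plane)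
  also have "\<dots> = mixed_diff (\<lambda>p q. netvf F E G (st (p, q, 0)) 2)"
    using assms(1,3) by (rule netvf_mixed_diff_12)
  also have "\<dots> = mixed_diff (\<lambda>p q. GH a b c (st (p, q, 0)) 2)"
    by (simp add: on_plane)
  also have "\<dots> = c"
    by (rule GH_mixed_diff(2))
  finally show False
    using assms(4) by simp
qed

end
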